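(* Let $(X,\widetilde{\tau},\mathfrak{a}_E,E)$ be a soft aura topological space. If it is soft $\mathfrak{a}$-$T_3$ then it is soft $\mathfrak{a}$-$T_2$; it is soft $\mathfrak{a}$-$T_2$ if and only if it is soft $\mathfrak{a}$-$T_1$; and if it is soft $\mathfrak{a}$-$T_1$ then it is soft $\mathfrak{a}$-$T_0$.
   Context: For a nonempty set $X$ and nonempty parameter set $E$, a soft set is a map $F:E\to\mathcal{P}(X)$, written $(F,E)$. A soft topology $\widetilde{\tau}$ is a family of soft sets containing the soft sets with all values $\emptyset$ and all values $X$, closed under arbitrary parameterwise unions and finite parameterwise intersections. A soft scope function is a map $\mathfrak{a}_E:X\to\widetilde{\tau}$ with $x\in\mathfrak{a}_E(x)(e)$ for all $x\in X,e\in E$; $(X,\widetilde{\tau},\mathfrak{a}_E,E)$ is a soft aura topological space. $\mathrm{int}_{\mathfrak{a}}(G,E)(e)=\{x:\mathfrak{a}_E(x)(e)\subseteq G(e)\}$; $(G,E)$ is soft $\mathfrak{a}$-open if $\mathrm{int}_{\mathfrak{a}}(G,E)=(G,E)$ and soft $\mathfrak{a}$-closed if its parameterwise complement is soft $\mathfrak{a}$-open. The space is: soft $\mathfrak{a}$-$T_0$ if for all distinct $x,y$ there is $e\in E$ with $y\notin\mathfrak{a}_E(x)(e)$ or $x\notin\mathfrak{a}_E(y)(e)$; soft $\mathfrak{a}$-$T_1$ if for all distinct $x,y$ and all $e$, $y\notin\mathfrak{a}_E(x)(e)$ and $x\notin\mathfrak{a}_E(y)(e)$; soft $\mathfrak{a}$-$T_2$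 if for all distinct $x,y$ and all $e$, $\mathfrak{a}_E(x)(e)\cap\mathfrak{a}_E(y)(e)=\emptyset$; soft $\mathfrak{a}$-regular if for every $x\in X$, $e\in E$ and soft $\mathfrak{a}$-closed $(C,E)$ with $x\notin C(e)$ there are soft $\mathfrak{a}$-open $(U,E),(V,E)$ with $x\in U(e)$, $C(e)\subseteq V(e)$, $U(e)\cap V(e)=\emptyset$; soft $\mathfrak{a}$-$T_3$ if soft $\mathfrak{a}$-regular and soft $\mathfrak{a}$-$T_1$. *)

theory Defs
  imports Main
begin

text \<open>The universe X is the type 'x, the parameter set E is the type 'e
  (both nonempty, as types are). A soft set (F,E) is a map F :: 'e => 'x set.\<close>

type_synonym ('e, 'x) soft_set = "'e \<Rightarrow> 'x set"

definition soft_topology :: "('e, 'x) soft_set set \<Rightarrow> bool" where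
  "soft_topology T \<longleftrightarrow>
     (\<lambda>e. {}) \<in> T \<and> (\<lambda>e. UNIV) \<in> T \<and>
     (\<forall>S \<subseteq> T. (\<lambda>e. \<Union>F\<in>S. F e) \<in> T) \<and>
     (\<forall>F\<in>T. \<forall>G\<in>T. (\<lambda>e. F e \<inter> G e) \<in> T)"

definition soft_scope_function :: "('e, 'x) soft_set set \<Rightarrow> ('x \<Rightarrow> ('e, 'x) soft_set) \<Rightarrow> bool" where
  "soft_scope_function T a \<longleftrightarrow> (\<forall>x. a x \<in> T \<and> (\<forall>e. x \<in> a x e))"

definition soft_aura_space :: "('e, 'x) soft_set set \<Rightarrow> ('x \<Rightarrow> ('e, 'x) soft_set) \<Rightarrow> bool" where
  "soft_aura_space T a \<longleftrightarrow> soft_topology T \<and> soft_scope_function T a"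

definition soft_a_int :: "('x \<Rightarrow> ('e, 'x) soft_set) \<Rightarrow> ('e, 'x) soft_set \<Rightarrow> ('e, 'x) soft_set" where
  "soft_a_int a G = (\<lambda>e. {x. a x e \<subseteq> G e})"

definition soft_a_open :: "('x \<Rightarrow> ('e, 'x) soft_set) \<Rightarrow> ('e, 'x) soft_set \<Rightarrow> bool" where
  "soft_a_open a G \<longleftrightarrow> soft_a_int a G = G"

definition soft_a_closed :: "('x \<Rightarrow> ('e, 'x) soft_set) \<Rightarrow> ('e, 'x) soft_set \<Rightarrow> bool" where
  "soft_a_closed a C \<longleftrightarrow> soft_a_open a (\<lambda>e. - C e)"

definition soft_a_T0 :: "('x \<Rightarrow> ('e, 'x) soft_set) \<Rightarrow> bool" where
  "soft_a_T0 a \<longleftrightarrow> (\<forall>x y. x \<noteq> y \<longrightarrow> (\<exists>e. y \<notin> a x e \<or> x \<notin> a y e))"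

definition soft_a_T1 :: "('x \<Rightarrow> ('e, 'x) soft_set) \<Rightarrow> bool" where
  "soft_a_T1 a \<longleftrightarrow> (\<forall>x y. x \<noteq> y \<longrightarrow> (\<forall>e. y \<notin> a x e \<and> x \<notin> a y e))"

definition soft_a_T2 :: "('x \<Rightarrow> ('e, 'x) soft_set) \<Rightarrow> bool" where
  "soft_a_T2 a \<longleftrightarrow> (\<forall>x y. x \<noteq> y \<longrightarrow> (\<forall>e. a x e \<inter> a y e = {}))"

definition soft_a_regular :: "('x \<Rightarrow> ('e, 'x) soft_set) \<Rightarrow> bool" where
  "soft_a_regular a \<longleftrightarrow>
     (\<forall>x e C. soft_a_closed a C \<and> x \<notin> C e \<longrightarrow>
        (\<exists>U V. soft_a_open a U \<and> soft_a_open a V \<and> x \<in> U e \<and> C e \<subseteq> V e \<and> U e \<inter> V e = {}))"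

definition soft_a_T3 :: "('x \<Rightarrow> ('e, 'x) soft_set) \<Rightarrow> bool" where
  "soft_a_T3 a \<longleftrightarrow> soft_a_regular a \<and> soft_a_T1 a"

end

theory Submission
  imports Defs
begin

text \<open>Soft \<open>\<aa>\<close>-\<open>T\<^sub>1\<close> says precisely that every scope \<open>\<aa>\<^sub>E(x)(e)\<close> lies in \<open>{x}\<close>; then
  scopes of distinct points are disjoint. Conversely, disjoint scopes separate
  points because each point lies in its own scope.\<close>

lemma soft_a_T1_iff_scope_subset_singleton:
  "soft_a_T1 a \<longleftrightarrow> (\<forall>x e. a x e \<subseteq> {x})"
  unfolding soft_a_T1_def by blast

lemma soft_a_T1_imp_T2:
  assumes "soft_a_T1 a"
  shows "soft_a_T2 a"
proof -
  have "a x e \<subseteq> {x}" for x e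
    using assms by (simp add: soft_a_T1_iff_scope_subset_singleton)
  then show ?thesis
    unfolding soft_a_T2_def by blast
qed

lemma soft_a_T2_imp_T1:
  assumes "\<And>x e. x \<in> a x e" and "soft_a_T2 a"
  shows "soft_a_T1 a"
  using assms unfolding soft_a_T1_def soft_a_T2_def by blast

lemma soft_a_T1_imp_T0: "soft_a_T1 a \<Longrightarrow> soft_a_T0 a"
  unfolding soft_a_T1_def soft_a_T0_def by blast

lemma soft_a_T3_imp_T2: "soft_a_T3 a \<Longrightarrow> soft_a_T2 a"
  by (simp add: soft_a_T3_def soft_a_T1_imp_T2)

theorem theorem6p5:
  fixes T :: "('e, 'x) soft_set set" and a :: "'x \<Rightarrow> ('e, 'x) soft_set"
  assumes "soft_aura_space T a"
  shows "(soft_a_T3 a \<longrightarrow> soft_a_T2 a) \<and>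
         (soft_a_T2 a \<longleftrightarrow> soft_a_T1 a) \<and>
         (soft_a_T1 a \<longrightarrow> soft_a_T0 a)"
proof -
  have "x \<in> a x e" for x e
    using assms by (simp add: soft_aura_space_def soft_scope_function_def)
  then show ?thesis
    using soft_a_T3_imp_T2 soft_a_T2_imp_T1 soft_a_T1_imp_T2 soft_a_T1_imp_T0 by blast
qed

end
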